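(* Let $X\subseteq\mathbb{R}^d$ be compact, $\theta\in(0,1]$ and $0\leq s\leq d$. Then for all $0<r\leq1$ and every finite cover $\{U_i\}_i$ of $X$ by sets with $r\leq|U_i|\leq r^\theta$, \[ \sum_i|U_i|^s\ \geq\ r^s\,C_{r,\theta}^{s,d}(X). \]
   Context: $|U|$ denotes diameter. For $0\leq s\leq d$ and $0<r\leq1$, define on $\mathbb{R}^d$ the kernel $\phi_{r,\theta}^{s,d}(x)=1$ if $|x|<r$, $=(r/|x|)^s$ if $r\leq|x|<r^\theta$, and $=r^{\theta(d-s)+s}/|x|^d$ if $r^\theta\leq|x|$. For compact $X$, $C_{r,\theta}^{s,d}(X)=\big(\inf_\mu\iint\phi_{r,\theta}^{s,d}(x-y)\,d\mu(x)\,d\mu(y)\big)^{-1}$, the infimum taken over Borel probability measures $\mu$ supported on $X$. *)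

theory Defs
  imports "HOL-Analysis.Analysis" "HOL-Probability.Probability"
begin

definition kernel_phi :: "real \<Rightarrow> real \<Rightarrow> real \<Rightarrow> real \<Rightarrow> 'a::euclidean_space \<Rightarrow> real" where
  "kernel_phi r \<theta> s d x =
     (if norm x < r then 1
      else if norm x < r powr \<theta> then (r / norm x) powr s
      else r powr (\<theta> * (d - s) + s) / norm x powr d)"

definition prob_measures_on :: "'a::euclidean_space set \<Rightarrow> 'a measure set" where
  "prob_measures_on X =
     {\<mu>. prob_space \<mu> \<and> sets \<mu> = sets borel \<and> emeasure \<mu> (UNIV - X) = 0}"

definition phi_energy :: "real \<Rightarrow> real \<Rightarrow> real \<Rightarrow> real \<Rightarrow> 'a::euclidean_space measure \<Rightarrow> ennreal" where
  "phi_energy r \<theta> s d \<mu> =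
     (\<integral>\<^sup>+ x. (\<integral>\<^sup>+ y. ennreal (kernel_phi r \<theta> s d (x - y)) \<partial>\<mu>) \<partial>\<mu>)"

definition capacity_C :: "real \<Rightarrow> real \<Rightarrow> real \<Rightarrow> 'a::euclidean_space set \<Rightarrow> real" where
  "capacity_C r \<theta> s X =
     enn2real (inverse (INF \<mu> \<in> prob_measures_on X. phi_energy r \<theta> s (real DIM('a)) \<mu>))"

end

theory Submission
  imports Defs
begin

(* Refine the closures of the U i to disjoint Borel sets A i; as mu is carried by X, the masses
   mu (A i) add up to at least 1. Two points of A i are at distance at most |U i|, which lies in
   [r, r^theta], and there the kernel is at least (r / |U i|)^s. Hence the energy of mu is at least
   sum_i (r / |U i|)^s mu (A i)^2, which by Cauchy-Schwarz is at least r^s / sum_i |U i|^s.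
   Taking the infimum over mu and inverting gives the bound on the capacity. *)

lemma inverse_sum_le_sum_power2_divide:
  fixes m b :: "'i \<Rightarrow> real"
  assumes "finite I" "\<And>i. i \<in> I \<Longrightarrow> b i > 0" "sum m I \<ge> 1"
  shows "1 / sum b I \<le> (\<Sum>i\<in>I. m i ^ 2 / b i)"
proof -
  have "I \<noteq> {}" using assms(3) by auto
  then have b_pos: "sum b I > 0" using assms(1,2) by (intro sum_pos) auto
  have "(\<Sum>i\<in>I. m i / sqrt (b i) * sqrt (b i)) = sum m I"
    using assms(2) by (intro sum.cong refl) (simp add: less_imp_neq[symmetric])
  moreover have "(\<Sum>i\<in>I. (m i / sqrt (b i))\<^sup>2) = (\<Sum>i\<in>I. m i ^ 2 / b i)"
    "(\<Sum>i\<in>I. (sqrt (b i))\<^sup>2) = sum b I"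
    using assms(2) by (auto intro!: sum.cong simp: power_divide less_imp_le)
  ultimately have "(sum m I)\<^sup>2 \<le> (\<Sum>i\<in>I. m i ^ 2 / b i) * sum b I"
    using Cauchy_Schwarz_ineq_sum[of "\<lambda>i. m i / sqrt (b i)" "\<lambda>i. sqrt (b i)" I] by simp
  moreover have "1 \<le> (sum m I)\<^sup>2" using assms(3) by (simp add: one_le_power)
  ultimately show ?thesis using b_pos by (simp add: divide_le_eq)
qed

lemma finite_disjoint_family_refinement:
  assumes "finite I" "\<And>i. i \<in> I \<Longrightarrow> V i \<in> sets M"
  obtains A where "disjoint_family_on A I" "\<And>i. i \<in> I \<Longrightarrow> A i \<subseteq> V i"
    "\<And>i. i \<in> I \<Longrightarrow> A i \<in> sets M" "(\<Union>i\<in>I. A i) = (\<Union>i\<in>I. V i)"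
proof -
  obtain n and g :: "nat \<Rightarrow> _" where g: "bij_betw g {0..<n} I"
    using ex_bij_betw_nat_finite[OF assms(1)] by blast
  define h where "h = inv_into {0..<n} g"
  have h: "bij_betw h I {0..<n}" unfolding h_def using g by (rule bij_betw_inv_into)
  have gh: "g (h i) = i" if "i \<in> I" for i
    unfolding h_def using g that by (rule bij_betw_inv_into_right)
  define B where "B k = (if k < n then V (g k) else {})" for k
  have B: "range B \<subseteq> sets M"
    using bij_betw_apply[OF g] assms(2) by (auto simp: B_def)
  define A where "A i = disjointed B (h i)" for i
  show thesis
  proof
    show "disjoint_family_on A I"
      unfolding disjoint_family_on_def
    proof (intro ballI impI)
      fix i j assume "i \<in> I" "j \<in> I" "i \<noteq> j"
      then have "h i \<noteq> h j" using bij_betw_imp_inj_on[OF h] by (auto dest: inj_onD)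
      then show "A i \<inter> A j = {}"
        unfolding A_def by (rule disjoint_family_onD[OF disjoint_family_disjointed, rotated 2]) simp_all
    qed
    show "A i \<subseteq> V i" if "i \<in> I" for i
      using disjointed_subset[of B "h i"] bij_betw_apply[OF h that]
      by (simp add: A_def B_def gh[OF that])
    show "A i \<in> sets M" if "i \<in> I" for i
      using sets.range_disjointed_sets[OF B] by (auto simp: A_def)
    have "(\<Union>i\<in>I. A i) = (\<Union>k\<in>h ` I. disjointed B k)" by (simp add: A_def image_image)
    also have "\<dots> = (\<Union>k\<in>{0..<n}. B k)"
      by (simp only: bij_betw_imp_surj_on[OF h] finite_UN_disjointed_eq)
    also have "\<dots> = (\<Union>k\<in>{0..<n}. V (g k))" by (simp add: B_def)
    also have "\<dots> = (\<Union>i\<in>g ` {0..<n}. V i)" by (simp add: image_image)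
    finally show "(\<Union>i\<in>I. A i) = (\<Union>i\<in>I. V i)" by (simp only: bij_betw_imp_surj_on[OF g])
  qed
qed

lemma kernel_phi_ge_ratio_powr:
  assumes "0 < r" "0 \<le> s" "r \<le> D" "D \<le> r powr \<theta>" "norm z \<le> D"
  shows "(r / D) powr s \<le> kernel_phi r \<theta> s d z"
proof -
  have "D > 0" using assms by linarith
  consider "norm z < r" | "r \<le> norm z" "norm z < r powr \<theta>" | "r powr \<theta> \<le> norm z"
    by linarith
  then show ?thesis
  proof cases
    case 1
    have "(r / D) powr s \<le> 1"
      using assms \<open>D > 0\<close> by (intro powr_le1) (auto simp: divide_le_eq)
    then show ?thesis using 1 by (simp add: kernel_phi_def)
  next
    case 2
    have "(r / D) powr s \<le> (r / norm z) powr s"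
      using assms 2 \<open>D > 0\<close> by (intro powr_mono2 divide_left_mono mult_pos_pos) auto
    then show ?thesis using 2 by (simp add: kernel_phi_def)
  next
    case 3
    then have z: "norm z = r powr \<theta>" and D: "D = r powr \<theta>" using assms by linarith+
    have "r powr (\<theta> * (d - s) + s) / (r powr \<theta>) powr d = r powr (s - \<theta> * s)"
      using assms by (simp add: powr_powr powr_diff[symmetric] algebra_simps)
    also have "\<dots> = (r / r powr \<theta>) powr s"
      using assms by (simp add: powr_divide powr_powr powr_diff algebra_simps)
    finally have "kernel_phi r \<theta> s d z = (r / r powr \<theta>) powr s"
      using z D \<open>r \<le> D\<close> by (simp add: kernel_phi_def not_less)
    then show ?thesis using D by simp
  qed
qed

lemma nn_integral_nn_integral_ge_sum_power2:
  assumes "finite_measure M" "finite I" "disjoint_family_on A I"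
    and "\<And>i. i \<in> I \<Longrightarrow> A i \<in> sets M" "\<And>i. i \<in> I \<Longrightarrow> 0 \<le> c i"
    and "\<And>i x y. i \<in> I \<Longrightarrow> x \<in> A i \<Longrightarrow> y \<in> A i \<Longrightarrow> c i \<le> k x y"
  shows "ennreal (\<Sum>i\<in>I. c i * measure M (A i) ^ 2) \<le> (\<integral>\<^sup>+ x. (\<integral>\<^sup>+ y. ennreal (k x y) \<partial>M) \<partial>M)"
proof -
  interpret finite_measure M by (rule assms(1))
  define g where "g x y = (\<Sum>i\<in>I. ennreal (c i) * indicator (A i) x * indicator (A i) y)" for x y
  have "g x y \<le> ennreal (k x y)" for x y
  proof (cases "\<exists>i\<in>I. x \<in> A i \<and> y \<in> A i")
    case True
    then obtain i where i: "i \<in> I" "x \<in> A i" "y \<in> A i" by blast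
    have "x \<notin> A j" if "j \<in> I - {i}" for j
      using assms(3) i that by (auto simp: disjoint_family_on_def)
    then have "g x y = ennreal (c i)"
      using i by (simp add: g_def sum.remove[OF assms(2) i(1)])
    then show ?thesis using assms(6)[OF i] by (simp add: ennreal_leI)
  next
    case False
    then have "g x y = 0" by (auto simp: g_def intro!: sum.neutral)
    then show ?thesis by simp
  qed
  then have le: "(\<integral>\<^sup>+ x. (\<integral>\<^sup>+ y. g x y \<partial>M) \<partial>M) \<le> (\<integral>\<^sup>+ x. (\<integral>\<^sup>+ y. ennreal (k x y) \<partial>M) \<partial>M)"
    by (intro nn_integral_mono)
  have inner: "(\<integral>\<^sup>+ y. g x y \<partial>M) = (\<Sum>i\<in>I. ennreal (c i) * indicator (A i) x * emeasure M (A i))" for x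
    unfolding g_def using assms(4)
    by (subst nn_integral_sum) (auto intro!: sum.cong nn_integral_cmult_indicator)
  have outer: "(\<integral>\<^sup>+ x. ennreal (c i) * indicator (A i) x * emeasure M (A i) \<partial>M)
      = ennreal (c i) * emeasure M (A i) * emeasure M (A i)" if "i \<in> I" for i
    using nn_integral_cmult_indicator[OF assms(4)[OF that], of "ennreal (c i) * emeasure M (A i)"]
    by (simp add: ac_simps)
  have "ennreal (\<Sum>i\<in>I. c i * measure M (A i) ^ 2) = (\<Sum>i\<in>I. ennreal (c i * measure M (A i) ^ 2))"
    using assms(5) by (intro sum_ennreal[symmetric]) auto
  also have "\<dots> = (\<Sum>i\<in>I. ennreal (c i) * emeasure M (A i) * emeasure M (A i))"
    using assms(5) by (intro sum.cong refl)
      (simp add: emeasure_eq_measure ennreal_mult power2_eq_square mult.assoc)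
  also have "\<dots> = (\<Sum>i\<in>I. (\<integral>\<^sup>+ x. ennreal (c i) * indicator (A i) x * emeasure M (A i) \<partial>M))"
    using outer by (rule sum.cong[OF refl, symmetric])
  also have "\<dots> = (\<integral>\<^sup>+ x. (\<integral>\<^sup>+ y. g x y \<partial>M) \<partial>M)"
    unfolding inner using assms(4) by (intro nn_integral_sum[symmetric]) auto
  finally show ?thesis using le by simp
qed

lemma enn2real_inverse_le_divide:
  assumes "ennreal q \<le> E" "0 < q"
  shows "enn2real (inverse E) \<le> 1 / q"
proof (cases E rule: ennreal_cases)
  case (real t)
  with assms have "q \<le> t" by (simp add: ennreal_le_iff)
  with assms real show ?thesis
    by (simp add: inverse_ennreal divide_inverse le_imp_inverse_le)
qed (use assms in simp)

lemma prob_measures_on_empty: "prob_measures_on {} = {}"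
proof -
  have False if "\<mu> \<in> prob_measures_on {}" for \<mu> :: "'a measure"
  proof -
    have "prob_space \<mu>" "space \<mu> = UNIV" "emeasure \<mu> UNIV = 0"
      using that sets_eq_imp_space_eq[of \<mu> borel] by (auto simp: prob_measures_on_def)
    then show False using prob_space.emeasure_space_1[of \<mu>] by simp
  qed
  then show ?thesis by blast
qed

lemma prob_measures_on_measure_eq_1:
  assumes "\<mu> \<in> prob_measures_on X" "X \<in> sets borel"
  shows "measure \<mu> X = 1"
proof -
  interpret prob_space \<mu> using assms(1) by (simp add: prob_measures_on_def)
  have "sets \<mu> = sets borel" "emeasure \<mu> (UNIV - X) = 0"
    using assms(1) by (auto simp: prob_measures_on_def)
  moreover from this(1) have "space \<mu> = UNIV" by (rule sets_eq_imp_space_eq[THEN trans]) simp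
  ultimately show ?thesis
    using assms(2) prob_compl[of X] by (simp add: measure_def)
qed

lemma capacity_C_le:
  assumes "0 < q" "\<And>\<mu>. \<mu> \<in> prob_measures_on X \<Longrightarrow> ennreal q \<le> phi_energy r \<theta> s (real DIM('a)) \<mu>"
  shows "capacity_C r \<theta> s (X :: 'a::euclidean_space set) \<le> 1 / q"
  unfolding capacity_C_def using assms by (intro enn2real_inverse_le_divide INF_greatest)

lemma phi_energy_ge_cover:
  fixes \<mu> :: "'a::euclidean_space measure" and U :: "'i \<Rightarrow> 'a set"
  assumes \<mu>: "\<mu> \<in> prob_measures_on X" and "X \<in> sets borel" "0 \<le> s" "0 < r"
    and "finite I" "X \<subseteq> (\<Union>i\<in>I. U i)" "\<And>i. i \<in> I \<Longrightarrow> bounded (U i)"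
    and diam: "\<And>i. i \<in> I \<Longrightarrow> r \<le> diameter (U i) \<and> diameter (U i) \<le> r powr \<theta>"
  shows "ennreal (r powr s / (\<Sum>i\<in>I. diameter (U i) powr s)) \<le> phi_energy r \<theta> s d \<mu>"
proof -
  interpret prob_space \<mu> using \<mu> by (simp add: prob_measures_on_def)
  have sets_\<mu>: "sets \<mu> = sets borel" using \<mu> by (simp add: prob_measures_on_def)
  \<comment> \<open>Closures, because the \<open>U i\<close> need not be Borel; taking closures keeps the diameters.\<close>
  obtain A where disj: "disjoint_family_on A I" and A_sub: "\<And>i. i \<in> I \<Longrightarrow> A i \<subseteq> closure (U i)"
    and A_sets: "\<And>i. i \<in> I \<Longrightarrow> A i \<in> sets \<mu>"
    and A_Un: "(\<Union>i\<in>I. A i) = (\<Union>i\<in>I. closure (U i))"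
    using finite_disjoint_family_refinement[OF \<open>finite I\<close>, of "\<lambda>i. closure (U i)" \<mu>] sets_\<mu>
    by auto
  have "X \<subseteq> (\<Union>i\<in>I. A i)"
    using assms(6) closure_subset unfolding A_Un by blast
  then have "1 \<le> measure \<mu> (\<Union>i\<in>I. A i)"
    using prob_measures_on_measure_eq_1[OF \<mu> \<open>X \<in> sets borel\<close>] A_sets \<open>finite I\<close>
    by (metis finite_measure_mono sets.finite_UN)
  also have "\<dots> = (\<Sum>i\<in>I. measure \<mu> (A i))"
    using A_sets disj \<open>finite I\<close> by (intro measure_finite_Union) auto
  finally have mass: "1 \<le> (\<Sum>i\<in>I. measure \<mu> (A i))" .
  define D where "D i = diameter (U i)" for i
  have D_pos: "0 < D i" if "i \<in> I" for i using diam[OF that] \<open>0 < r\<close> by (simp add: D_def)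
  have kernel: "(r / D i) powr s \<le> kernel_phi r \<theta> s d (x - y)"
    if "i \<in> I" "x \<in> A i" "y \<in> A i" for i x y
  proof -
    have "x \<in> closure (U i)" "y \<in> closure (U i)" using that A_sub by blast+
    then have "norm (x - y) \<le> D i"
      using bounded_closure[OF assms(7)[OF that(1)]] diameter_bounded_bound[of "closure (U i)" x y]
      by (simp add: D_def dist_norm diameter_closure assms(7)[OF that(1)])
    then show ?thesis
      using diam[OF that(1)] \<open>0 \<le> s\<close> \<open>0 < r\<close> unfolding D_def by (intro kernel_phi_ge_ratio_powr) auto
  qed
  have weights_pos: "0 < D i powr s / r powr s" if "i \<in> I" for i
    using D_pos[OF that] \<open>0 < r\<close> by simp
  have "r powr s / (\<Sum>i\<in>I. D i powr s) = 1 / (\<Sum>i\<in>I. D i powr s / r powr s)"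
    by (simp add: sum_divide_distrib[symmetric])
  also have "\<dots> \<le> (\<Sum>i\<in>I. measure \<mu> (A i) ^ 2 / (D i powr s / r powr s))"
    by (rule inverse_sum_le_sum_power2_divide[OF \<open>finite I\<close> weights_pos mass])
  also have "\<dots> = (\<Sum>i\<in>I. (r / D i) powr s * measure \<mu> (A i) ^ 2)"
  proof (intro sum.cong refl)
    fix i assume "i \<in> I"
    then have "(r / D i) powr s = r powr s / D i powr s"
      using D_pos \<open>0 < r\<close> by (simp add: powr_divide)
    then show "measure \<mu> (A i) ^ 2 / (D i powr s / r powr s) = (r / D i) powr s * measure \<mu> (A i) ^ 2"
      by (simp add: ac_simps)
  qed
  finally have "r powr s / (\<Sum>i\<in>I. D i powr s) \<le> (\<Sum>i\<in>I. (r / D i) powr s * measure \<mu> (A i) ^ 2)" .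
  moreover have "ennreal (\<Sum>i\<in>I. (r / D i) powr s * measure \<mu> (A i) ^ 2) \<le> phi_energy r \<theta> s d \<mu>"
    unfolding phi_energy_def
    by (rule nn_integral_nn_integral_ge_sum_power2[OF finite_measure_axioms \<open>finite I\<close> disj A_sets _ kernel])
      simp_all
  ultimately show ?thesis unfolding D_def by (rule order_trans[OF ennreal_leI])
qed

theorem lemma5p2:
  fixes X :: "'a::euclidean_space set" and \<theta> s r :: real
    and I :: "'i set" and U :: "'i \<Rightarrow> 'a set"
  assumes "compact X"
    and "0 < \<theta>" "\<theta> \<le> 1"
    and "0 \<le> s" "s \<le> real DIM('a)"
    and "0 < r" "r \<le> 1"
    and "finite I"
    and "X \<subseteq> (\<Union>i\<in>I. U i)"
    and "\<And>i. i \<in> I \<Longrightarrow> bounded (U i)"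
    and "\<And>i. i \<in> I \<Longrightarrow> r \<le> diameter (U i) \<and> diameter (U i) \<le> r powr \<theta>"
  shows "(\<Sum>i\<in>I. diameter (U i) powr s) \<ge> r powr s * capacity_C r \<theta> s X"
proof (cases "I = {}")
  case True
  with assms(9) have "X = {}" by simp
  then show ?thesis by (simp add: capacity_C_def prob_measures_on_empty True)
next
  case False
  define S where "S = (\<Sum>i\<in>I. diameter (U i) powr s)"
  have "0 < S"
    unfolding S_def using False assms(6,8) by (intro sum_pos) (auto dest!: assms(11))
  have "capacity_C r \<theta> s X \<le> 1 / (r powr s / S)"
  proof (rule capacity_C_le)
    show "0 < r powr s / S" using \<open>0 < S\<close> \<open>0 < r\<close> by simp
    show "ennreal (r powr s / S) \<le> phi_energy r \<theta> s (real DIM('a)) \<mu>"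
      if "\<mu> \<in> prob_measures_on X" for \<mu>
      unfolding S_def using that borel_closed[OF compact_imp_closed[OF assms(1)]] assms(4,6,8-11)
      by (rule phi_energy_ge_cover)
  qed
  then have "r powr s * capacity_C r \<theta> s X \<le> r powr s * (1 / (r powr s / S))"
    using \<open>0 < r\<close> by (intro mult_left_mono) auto
  also have "\<dots> = S" using \<open>0 < r\<close> by simp
  finally show ?thesis unfolding S_def .
qed

end
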